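(* Let $\boldsymbol{\mathcal{D}} = \begin{pmatrix}\boldsymbol{W}_p\\ \boldsymbol{U}_f \\ \boldsymbol{Y}_f\end{pmatrix}$ be a data matrix with full row rank and LQ decomposition as described in the context, let $\boldsymbol{Z}:=\begin{pmatrix}\boldsymbol{W}_p\\ \boldsymbol{U}_f\end{pmatrix}$, $\boldsymbol{\Pi}:=\boldsymbol{Z}^+\boldsymbol{Z}$, $\boldsymbol{\Pi}_\perp:=\boldsymbol{I}-\boldsymbol{\Pi}$, and let $\lambda_2,\lambda_3$ be real weights. Then $\boldsymbol{\gamma}$-DDPC with regularization $\tilde h(\boldsymbol{\gamma}) = \lambda_2 \|\boldsymbol{\gamma}_2\|_2^2 + \lambda_3 \|\boldsymbol{\gamma}_3\|_2^2$ is equivalent to DeePC with regularization $h(\boldsymbol{a}) = \lambda_2 \|\boldsymbol{a}\|_2^2 + (\lambda_3-\lambda_2) \|\boldsymbol{\Pi}_\perp\boldsymbol{a}\|_2^2$.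
   Context: $\boldsymbol{Z}^+$ denotes the Moore–Penrose pseudoinverse. Data: $m$ inputs, $p$ outputs, past horizon $N_p$, future horizon $N_f$, $L=N_p+N_f$, and $\ell$ data trajectories. The data matrix $\boldsymbol{\mathcal{D}}\in\mathbb{R}^{L(m+p)\times\ell}$ has blocks $\boldsymbol{W}_p\in\mathbb{R}^{N_p(m+p)\times\ell}$ (past inputs and outputs), $\boldsymbol{U}_f\in\mathbb{R}^{mN_f\times \ell}$, $\boldsymbol{Y}_f\in\mathbb{R}^{pN_f\times\ell}$ and is assumed to have full row rank. Its LQ decomposition is $\boldsymbol{\mathcal{D}} = \begin{pmatrix} \boldsymbol{L}_{11} & \boldsymbol{0} & \boldsymbol{0} & \boldsymbol{0} \\ \boldsymbol{L}_{21} & \boldsymbol{L}_{22} & \boldsymbol{0} & \boldsymbol{0} \\ \boldsymbol{L}_{31} & \boldsymbol{L}_{32} & \boldsymbol{L}_{33} & \boldsymbol{0} \end{pmatrix}\begin{pmatrix}\boldsymbol{Q}_1\\ \boldsymbol{Q}_2\\ \boldsymbol{Q}_3\\ \boldsymbol{Q}_4\end{pmatrix}$, with non-singular square diagonal blocks $\boldsymbol{L}_{11},\boldsymbol{L}_{22},\boldsymbol{L}_{33}$ (of sizes matching $\boldsymbol{W}_p,\boldsymbol{U}_f,\boldsymbol{Y}_f$) and $\boldsymbol{Q}=\begin{pmatrix}\boldsymbol{Q}_1^\top & \boldsymbol{Q}_2^\top&\boldsymbol{Q}_3^\top&\boldsymbol{Q}_4^\top\end{pmatrix}^\top\in\mathbb{R}^{\ell\times\ell}$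 orthogonal; $\boldsymbol{\gamma}_i := \boldsymbol{Q}_i\boldsymbol{a}$. Given current past I/O data $\boldsymbol{\xi}\in\mathbb{R}^{N_p(m+p)}$, a cost $J(\boldsymbol{\xi},\mathbf{u}_f,\mathbf{y}_f)$ and constraint sets $\mathcal{U}$, $\mathcal{Y}$: DeePC with regularization $h$ is the problem $\min_{\mathbf{u}_f,\mathbf{y}_f,\boldsymbol{a}} J(\boldsymbol{\xi},\mathbf{u}_f,\mathbf{y}_f)+h(\boldsymbol{a})$ s.t. $(\boldsymbol{\xi};\mathbf{u}_f;\mathbf{y}_f)=\boldsymbol{\mathcal{D}}\boldsymbol{a}$, $(\mathbf{u}_f,\mathbf{y}_f)\in\mathcal{U}\times\mathcal{Y}$. $\boldsymbol{\gamma}$-DDPC with regularization $\tilde h$ is the problem $\min_{\mathbf{u}_f,\mathbf{y}_f,\boldsymbol{\gamma}_2,\boldsymbol{\gamma}_3} J(\boldsymbol{\xi},\mathbf{u}_f,\mathbf{y}_f)+\tilde h(\boldsymbol{\gamma})$ s.t. $\boldsymbol{\gamma}_1=\boldsymbol{L}_{11}^{-1}\boldsymbol{\xi}$, $\mathbf{u}_f = \boldsymbol{L}_{21}\boldsymbol{\gamma}_1+\boldsymbol{L}_{22}\boldsymbol{\gamma}_2$, $\mathbf{y}_f=\boldsymbol{L}_{31}\boldsymbol{\gamma}_1+\boldsymbol{L}_{32}\boldsymbol{\gamma}_2+\boldsymbol{L}_{33}\boldsymbol{\gamma}_3$, $(\mathbf{u}_f,\mathbf{y}_f)\in\mathcal{U}\times\mathcal{Y}$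 (i.e., $\boldsymbol{\gamma}_4=\boldsymbol{0}$ is fixed). Two such optimal control problems are called equivalent if, for every $\boldsymbol{\xi}$, they yield the same optimal predicted input/output trajectories $(\mathbf{u}_f^\ast,\mathbf{y}_f^\ast)$ (not necessarily the same optimal cost). *)

theory Defs
  imports "Jordan_Normal_Form.Matrix"
begin

definition vstack :: "'a::zero mat \<Rightarrow> 'a mat \<Rightarrow> 'a mat" where
  "vstack A B = mat (dim_row A + dim_row B) (dim_col A)
     (\<lambda>(i,j). if i < dim_row A then A $$ (i,j) else B $$ (i - dim_row A, j))"

definition full_row_rank :: "real mat \<Rightarrow> bool" where
  "full_row_rank A \<longleftrightarrow> (\<forall>v \<in> carrier_vec (dim_row A).
       transpose_mat A *\<^sub>v v = 0\<^sub>v (dim_col A) \<longrightarrow> v = 0\<^sub>v (dim_row A))"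

definition mat_inv :: "real mat \<Rightarrow> real mat" where
  "mat_inv A = (THE B. B \<in> carrier_mat (dim_col A) (dim_row A) \<and>
                       A * B = 1\<^sub>m (dim_row A) \<and> B * A = 1\<^sub>m (dim_col A))"

definition pinv :: "real mat \<Rightarrow> real mat" where
  "pinv A = (THE X. X \<in> carrier_mat (dim_col A) (dim_row A) \<and>
                    A * X * A = A \<and> X * A * X = X \<and>
                    transpose_mat (A * X) = A * X \<and> transpose_mat (X * A) = X * A)"

definition sqnorm :: "real vec \<Rightarrow> real" where
  "sqnorm v = v \<bullet> v"

text \<open>Set of optimal predicted input/output trajectories of DeePC with regularization h,
  for data matrix D, past data xi, cost J and constraint sets U, Y.
  nu, ny: lengths of u_f and y_f; l: number of data columns.\<close>
definition deepc_opt ::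
  "real mat \<Rightarrow> nat \<Rightarrow> nat \<Rightarrow> (real vec \<Rightarrow> real vec \<Rightarrow> real vec \<Rightarrow> real) \<Rightarrow>
   (real vec \<Rightarrow> real) \<Rightarrow> real vec set \<Rightarrow> real vec set \<Rightarrow> real vec \<Rightarrow> (real vec \<times> real vec) set" where
  "deepc_opt D nu ny J h U Y xi =
    (let feas = (\<lambda>u y a. u \<in> carrier_vec nu \<and> y \<in> carrier_vec ny \<and> a \<in> carrier_vec (dim_col D) \<and>
                          xi @\<^sub>v u @\<^sub>v y = D *\<^sub>v a \<and> u \<in> U \<and> y \<in> Y);
         cost = (\<lambda>u y a. J xi u y + h a)
     in {(u, y). \<exists>a. feas u y a \<and>
           (\<forall>u' y' a'. feas u' y' a' \<longrightarrow> cost u y a \<le> cost u' y' a')})"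

text \<open>Set of optimal predicted input/output trajectories of gamma-DDPC with regularization
  ht (a function of gamma_2 and gamma_3; gamma_1 is fixed by xi and gamma_4 = 0).\<close>
definition gddpc_opt ::
  "real mat \<Rightarrow> real mat \<Rightarrow> real mat \<Rightarrow> real mat \<Rightarrow> real mat \<Rightarrow> real mat \<Rightarrow>
   (real vec \<Rightarrow> real vec \<Rightarrow> real vec \<Rightarrow> real) \<Rightarrow>
   (real vec \<Rightarrow> real vec \<Rightarrow> real vec \<Rightarrow> real) \<Rightarrow> real vec set \<Rightarrow> real vec set \<Rightarrow> real vec \<Rightarrow>
   (real vec \<times> real vec) set" where
  "gddpc_opt L11 L21 L22 L31 L32 L33 J ht U Y xi =
    (let g1 = mat_inv L11 *\<^sub>v xi;
         feas = (\<lambda>u y g2 g3. g2 \<in> carrier_vec (dim_col L22) \<and> g3 \<in> carrier_vec (dim_col L33) \<and>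
                    u = L21 *\<^sub>v g1 + L22 *\<^sub>v g2 \<and>
                    y = L31 *\<^sub>v g1 + L32 *\<^sub>v g2 + L33 *\<^sub>v g3 \<and> u \<in> U \<and> y \<in> Y);
         cost = (\<lambda>u y g2 g3. J xi u y + ht g1 g2 g3)
     in {(u, y). \<exists>g2 g3. feas u y g2 g3 \<and>
           (\<forall>u' y' g2' g3'. feas u' y' g2' g3' \<longrightarrow> cost u y g2 g3 \<le> cost u' y' g2' g3')})"

end

(* Write gamma = Q a for the coordinates of a with respect to the orthonormal rows of
   Q = [Q1; Q2; Q3; Q4]. The DeePC constraint (xi, u_f, y_f) = D a then says exactly that
   gamma1 = L11^-1 xi and that u_f, y_f are given by the gamma-DDPC equations, while gamma4 is
   unconstrained. Since Z = L [Q1; Q2] with L = [L11 0; L21 L22] invertible and [Q1; Q2]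
   having orthonormal rows, Z^+ = [Q1; Q2]^T L^-1, so that Pi_perp = [Q3; Q4]^T [Q3; Q4].
   Hence the DeePC regularizer equals
     lambda2 (|gamma1|^2 + |gamma2|^2) + lambda3 (|gamma3|^2 + |gamma4|^2):
   it exceeds the gamma-DDPC regularizer by the constant lambda2 |gamma1|^2 plus
   lambda3 |gamma4|^2 >= 0, and the latter term vanishes at gamma4 = 0. So every feasible point
   of either problem is matched by a feasible point of the other with the same trajectories
   and no larger (shifted) cost. *)

theory Submission
  imports Defs "Jordan_Normal_Form.Determinant"
begin

section \<open>Vertical stacking of matrices\<close>

lemma vstack_carrier_mat [simp]:
  "A \<in> carrier_mat m c \<Longrightarrow> B \<in> carrier_mat n c \<Longrightarrow> vstack A B \<in> carrier_mat (m + n) c"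
  unfolding vstack_def by auto

lemma dim_row_vstack [simp]: "dim_row (vstack A B) = dim_row A + dim_row B"
  unfolding vstack_def by simp

lemma dim_col_vstack [simp]: "dim_col (vstack A B) = dim_col A"
  unfolding vstack_def by simp

lemma index_vstack [simp]:
  "i < dim_row A + dim_row B \<Longrightarrow> j < dim_col A \<Longrightarrow>
   vstack A B $$ (i, j) = (if i < dim_row A then A $$ (i, j) else B $$ (i - dim_row A, j))"
  unfolding vstack_def by simp

lemma vstack_assoc:
  assumes "dim_col B = dim_col A" "dim_col C = dim_col A"
  shows "vstack (vstack A B) C = vstack A (vstack B C)"
  using assms by (intro eq_matI) (auto simp: less_diff_conv add.assoc)

lemma row_vstack:
  assumes "A \<in> carrier_mat m c" "B \<in> carrier_mat n c" "i < m + n"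
  shows "row (vstack A B) i = (if i < m then row A i else row B (i - m))"
  using assms unfolding vstack_def by (intro eq_vecI) auto

lemma col_vstack:
  assumes "A \<in> carrier_mat m c" "B \<in> carrier_mat n c" "j < c"
  shows "col (vstack A B) j = col A j @\<^sub>v col B j"
  using assms unfolding vstack_def by (intro eq_vecI) auto

lemma vstack_mult_mat_vec:
  assumes "dim_col B = dim_col A"
  shows "vstack A B *\<^sub>v v = (A *\<^sub>v v) @\<^sub>v (B *\<^sub>v v)"
proof -
  have "A \<in> carrier_mat (dim_row A) (dim_col A)" "B \<in> carrier_mat (dim_row B) (dim_col A)"
    using assms by (auto intro: carrier_matI)
  from row_vstack[OF this] show ?thesis
    by (intro eq_vecI) auto
qed

lemma four_block_mat_mult_vstack:
  assumes "A \<in> carrier_mat m k" "B \<in> carrier_mat m k'" "C \<in> carrier_mat n k" "D \<in> carrier_mat n k'"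
    and "E \<in> carrier_mat k c" "F \<in> carrier_mat k' c"
  shows "four_block_mat A B C D * vstack E F = vstack (A * E + B * F) (C * E + D * F)"
proof (rule eq_matI)
  fix i j assume i: "i < dim_row (vstack (A * E + B * F) (C * E + D * F))"
    and j: "j < dim_col (vstack (A * E + B * F) (C * E + D * F))"
  have "col E j \<in> carrier_vec k" "col F j \<in> carrier_vec k'"
    using assms j by auto
  then have "(x @\<^sub>v y) \<bullet> col (vstack E F) j = x \<bullet> col E j + y \<bullet> col F j"
    if "x \<in> carrier_vec k" "y \<in> carrier_vec k'" for x y
    using assms j by (simp add: col_vstack scalar_prod_append[OF that])
  moreover have "row A i \<in> carrier_vec k" "row B i \<in> carrier_vec k'"
    "row C i \<in> carrier_vec k" "row D i \<in> carrier_vec k'" for i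
    using assms row_carrier by (metis carrier_matD(2))+
  ultimately show "(four_block_mat A B C D * vstack E F) $$ (i, j) =
      vstack (A * E + B * F) (C * E + D * F) $$ (i, j)"
    using assms i j row_four_block_mat[OF assms(1-4)] by auto
qed (use assms in auto)

lemma transpose_vstack_mult_vstack:
  assumes "A \<in> carrier_mat m c" "B \<in> carrier_mat n c" "C \<in> carrier_mat m d" "D \<in> carrier_mat n d"
  shows "transpose_mat (vstack A B) * vstack C D = transpose_mat A * C + transpose_mat B * D"
  using assms col_vstack[OF assms(1,2)] col_vstack[OF assms(3,4)]
  by (intro eq_matI) (auto simp: scalar_prod_append[of _ m _ n])

lemma vstack_orthonormal_rowsD:
  assumes A: "A \<in> carrier_mat m c" and B: "B \<in> carrier_mat n c"
    and orth: "vstack A B * transpose_mat (vstack A B) = 1\<^sub>m (m + n)"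
  shows "A * transpose_mat A = 1\<^sub>m m" "B * transpose_mat B = 1\<^sub>m n"
proof -
  have entry: "row (vstack A B) i \<bullet> row (vstack A B) j = 1\<^sub>m (m + n) $$ (i, j)"
    if "i < m + n" "j < m + n" for i j
    using that A B by (simp flip: orth)
  have "row A i \<bullet> row A j = 1\<^sub>m m $$ (i, j)" if "i < m" "j < m" for i j
    using entry[of i j] that row_vstack[OF A B] by simp
  then show "A * transpose_mat A = 1\<^sub>m m"
    using A by (intro eq_matI) auto
  have "row B i \<bullet> row B j = 1\<^sub>m n $$ (i, j)" if "i < n" "j < n" for i j
    using entry[of "m + i" "m + j"] that row_vstack[OF A B] by simp
  then show "B * transpose_mat B = 1\<^sub>m n"
    using B by (intro eq_matI) auto
qed

section \<open>Squared norms and isometries\<close>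

lemma sqnorm_nonneg: "0 \<le> sqnorm v"
  unfolding sqnorm_def scalar_prod_def by (auto intro: sum_nonneg)

lemma sqnorm_zero_vec [simp]: "sqnorm (0\<^sub>v n) = 0"
  unfolding sqnorm_def by simp

lemma sqnorm_append: "sqnorm (u @\<^sub>v v) = sqnorm u + sqnorm v"
  unfolding sqnorm_def by (rule scalar_prod_append) (rule carrier_vecI, rule refl)+

lemma sqnorm_isometry:
  assumes Q: "Q \<in> carrier_mat r c" and orth: "transpose_mat Q * Q = 1\<^sub>m c"
    and v: "v \<in> carrier_vec c"
  shows "sqnorm (Q *\<^sub>v v) = sqnorm v"
proof -
  have Qv: "Q *\<^sub>v v \<in> carrier_vec r"
    using Q v by (rule mult_mat_vec_carrier)
  have "sqnorm (Q *\<^sub>v v) = (transpose_mat Q *\<^sub>v (Q *\<^sub>v v)) \<bullet> v"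
    unfolding sqnorm_def by (rule transpose_vec_mult_scalar[OF Q v Qv, symmetric])
  also have "transpose_mat Q *\<^sub>v (Q *\<^sub>v v) = v"
    using Q v orth by (simp flip: assoc_mult_mat_vec[of _ c r _ c])
  finally show ?thesis
    unfolding sqnorm_def .
qed

section \<open>Inverses and the Moore--Penrose pseudoinverse\<close>

lemma invertible_matE:
  assumes A: "A \<in> carrier_mat n n" and "invertible_mat A"
  obtains B where "B \<in> carrier_mat n n" "A * B = 1\<^sub>m n" "B * A = 1\<^sub>m n"
proof -
  obtain B where AB: "A * B = 1\<^sub>m n" and BA: "B * A = 1\<^sub>m (dim_row B)"
    using assms unfolding invertible_mat_def inverts_mat_def by auto
  have "B \<in> carrier_mat n n"
    using arg_cong[OF AB, of dim_col] arg_cong[OF BA, of dim_col] A by auto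
  with AB BA show thesis
    using that by auto
qed

lemma mat_inv_inverse:
  assumes A: "A \<in> carrier_mat n n" and "invertible_mat A"
  shows "mat_inv A \<in> carrier_mat n n" "A * mat_inv A = 1\<^sub>m n" "mat_inv A * A = 1\<^sub>m n"
proof -
  obtain B where B: "B \<in> carrier_mat n n" and AB: "A * B = 1\<^sub>m n" and BA: "B * A = 1\<^sub>m n"
    using assms by (rule invertible_matE)
  have left_inverse_unique: "B' = B" if B': "B' \<in> carrier_mat n n" "B' * A = 1\<^sub>m n" for B'
  proof -
    have "B' = B' * (A * B)" using B' AB by simp
    also have "\<dots> = (B' * A) * B" by (rule assoc_mult_mat[OF B'(1) A B, symmetric])
    finally show ?thesis using B B' by simp
  qed
  have "mat_inv A = B"
    unfolding mat_inv_def
  proof (rule the_equality)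
    show "B \<in> carrier_mat (dim_col A) (dim_row A) \<and> A * B = 1\<^sub>m (dim_row A) \<and> B * A = 1\<^sub>m (dim_col A)"
      using A B AB BA by auto
  qed (use A left_inverse_unique in auto)
  then show "mat_inv A \<in> carrier_mat n n" "A * mat_inv A = 1\<^sub>m n" "mat_inv A * A = 1\<^sub>m n"
    using B AB BA by auto
qed

lemma invertible_mat_iff_det_nonzero:
  fixes A :: "'a :: field mat"
  assumes A: "A \<in> carrier_mat n n"
  shows "invertible_mat A \<longleftrightarrow> det A \<noteq> 0"
proof
  assume "invertible_mat A"
  then obtain B where "B \<in> carrier_mat n n" "A * B = 1\<^sub>m n" "B * A = 1\<^sub>m n"
    by (rule invertible_matE[OF A])
  then show "det A \<noteq> 0"
    using det_mult[OF A] by (metis det_one mult_zero_left zero_neq_one)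
next
  assume "det A \<noteq> 0"
  then obtain B where "B \<in> carrier_mat n n" "B * A = 1\<^sub>m n" "A * B = 1\<^sub>m n"
    using det_non_zero_imp_unit[OF A, of undefined] unfolding Units_def ring_mat_simps by auto
  then show "invertible_mat A"
    using A unfolding invertible_mat_def inverts_mat_def by auto
qed

lemma mat_inv_mult_vec_eq_iff:
  assumes A: "A \<in> carrier_mat n n" "invertible_mat A"
    and x: "x \<in> carrier_vec n" and b: "b \<in> carrier_vec n"
  shows "A *\<^sub>v x = b \<longleftrightarrow> x = mat_inv A *\<^sub>v b"
  using mat_inv_inverse[OF A] assoc_mult_mat_vec[OF A(1) _ b, of "mat_inv A"]
    assoc_mult_mat_vec[OF _ A(1) x, of "mat_inv A"] x b
  by auto

lemma penrose_inverse_unique: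
  fixes A X Y :: "real mat"
  assumes A: "A \<in> carrier_mat r c" and X: "X \<in> carrier_mat c r" and Y: "Y \<in> carrier_mat c r"
    and X1: "A * X * A = A" and X2: "X * A * X = X"
    and X3: "transpose_mat (A * X) = A * X" and X4: "transpose_mat (X * A) = X * A"
    and Y1: "A * Y * A = A" and Y2: "Y * A * Y = Y"
    and Y3: "transpose_mat (A * Y) = A * Y" and Y4: "transpose_mat (Y * A) = Y * A"
  shows "X = Y"
proof -
  have AX: "A * X \<in> carrier_mat r r" and AY: "A * Y \<in> carrier_mat r r"
    and XA: "X * A \<in> carrier_mat c c" and YA: "Y * A \<in> carrier_mat c c"
    using A X Y by auto
  have "A * X = transpose_mat ((A * Y) * (A * X))"
    using assoc_mult_mat[OF AY A X] Y1 X3 by simp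
  also have "\<dots> = (A * X) * (A * Y)"
    using X3 Y3 transpose_mult[OF AY AX] by simp
  also have "\<dots> = A * Y"
    using assoc_mult_mat[OF AX A Y] X1 by simp
  finally have AX_eq: "A * X = A * Y" .
  have "X * A = transpose_mat ((X * A) * (Y * A))"
    using assoc_mult_mat[OF X A YA] assoc_mult_mat[OF A Y A] Y1 X4 by simp
  also have "\<dots> = (Y * A) * (X * A)"
    using X4 Y4 transpose_mult[OF XA YA] by simp
  also have "\<dots> = Y * A"
    using assoc_mult_mat[OF Y A XA] assoc_mult_mat[OF A X A] X1 by simp
  finally have XA_eq: "X * A = Y * A" .
  have "X = X * (A * Y)"
    using assoc_mult_mat[OF X A X] X2 AX_eq by simp
  also have "\<dots> = Y * A * Y"
    using assoc_mult_mat[OF X A Y] XA_eq by simp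
  finally show "X = Y"
    using Y2 by simp
qed

lemma pinv_eqI:
  assumes A: "A \<in> carrier_mat r c" and X: "X \<in> carrier_mat c r"
    and "A * X * A = A" "X * A * X = X"
    and "transpose_mat (A * X) = A * X" "transpose_mat (X * A) = X * A"
  shows "pinv A = X"
  unfolding pinv_def
proof (rule the_equality)
  fix Y assume "Y \<in> carrier_mat (dim_col A) (dim_row A) \<and> A * Y * A = A \<and> Y * A * Y = Y \<and>
    transpose_mat (A * Y) = A * Y \<and> transpose_mat (Y * A) = Y * A"
  then show "Y = X"
    using penrose_inverse_unique[OF A X, of Y] assms by auto
qed (use assms in auto)

lemma pinv_mult_orthonormal_rows:
  assumes L: "L \<in> carrier_mat n n" "invertible_mat L"
    and R: "R \<in> carrier_mat n c" and orth: "R * transpose_mat R = 1\<^sub>m n"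
  shows "pinv (L * R) = transpose_mat R * mat_inv L"
    and "pinv (L * R) * (L * R) = transpose_mat R * R"
proof -
  note K = mat_inv_inverse[OF L]
  have Rt: "transpose_mat R \<in> carrier_mat c n" using R by simp
  have LR: "L * R \<in> carrier_mat n c" and X: "transpose_mat R * mat_inv L \<in> carrier_mat c n"
    using L R K by auto
  have right: "(L * R) * (transpose_mat R * mat_inv L) = 1\<^sub>m n"
    using assoc_mult_mat[OF L(1) R X] assoc_mult_mat[OF R Rt K(1), symmetric] orth L K by simp
  have left: "(transpose_mat R * mat_inv L) * (L * R) = transpose_mat R * R"
    using assoc_mult_mat[OF Rt K(1) LR] assoc_mult_mat[OF K(1) L(1) R, symmetric] R K by simp
  show pinv: "pinv (L * R) = transpose_mat R * mat_inv L"
  proof (rule pinv_eqI[OF LR X])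
    show "L * R * (transpose_mat R * mat_inv L) * (L * R) = L * R"
      using right left_mult_one_mat[OF LR] by simp
    show "transpose_mat R * mat_inv L * (L * R) * (transpose_mat R * mat_inv L) =
        transpose_mat R * mat_inv L"
      using assoc_mult_mat[OF Rt R X] assoc_mult_mat[OF R Rt K(1), symmetric] orth left K by simp
  qed (use right left R in \<open>auto simp: transpose_mult[of _ c n]\<close>)
  then show "pinv (L * R) * (L * R) = transpose_mat R * R"
    using left by simp
qed

section \<open>Optimal trajectories of parametrized minimization problems\<close>

definition optimal_outputs ::
  "('u \<Rightarrow> 'y \<Rightarrow> 'a \<Rightarrow> bool) \<Rightarrow> ('u \<Rightarrow> 'y \<Rightarrow> 'a \<Rightarrow> 'c :: ord) \<Rightarrow> ('u \<times> 'y) set" where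
  "optimal_outputs F f = {(u, y). \<exists>a. F u y a \<and> (\<forall>u' y' a'. F u' y' a' \<longrightarrow> f u y a \<le> f u' y' a')}"

lemma optimal_outputs_subset:
  fixes f :: "'u \<Rightarrow> 'y \<Rightarrow> 'a \<Rightarrow> 'c :: ordered_ab_group_add" and g :: "'u \<Rightarrow> 'y \<Rightarrow> 'b \<Rightarrow> 'c"
  assumes F_G: "\<And>u y a. F u y a \<Longrightarrow> \<exists>b. G u y b \<and> g u y b + c \<le> f u y a"
    and G_F: "\<And>u y b. G u y b \<Longrightarrow> \<exists>a. F u y a \<and> f u y a \<le> g u y b + c"
  shows "optimal_outputs F f \<subseteq> optimal_outputs G g"
  unfolding optimal_outputs_def
proof clarify
  fix u y a assume "F u y a" and opt: "\<forall>u' y' a'. F u' y' a' \<longrightarrow> f u y a \<le> f u' y' a'"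
  then obtain b where b: "G u y b" "g u y b + c \<le> f u y a"
    using F_G by blast
  have "g u y b \<le> g u' y' b'" if G': "G u' y' b'" for u' y' b'
  proof -
    obtain a' where "F u' y' a'" "f u' y' a' \<le> g u' y' b' + c"
      using G_F[OF G'] by blast
    then have "g u y b + c \<le> g u' y' b' + c"
      using b(2) opt by (meson order_trans)
    then show ?thesis by simp
  qed
  then show "\<exists>b. G u y b \<and> (\<forall>u' y' b'. G u' y' b' \<longrightarrow> g u y b \<le> g u' y' b')"
    using b(1) by blast
qed

lemma optimal_outputs_eqI:
  fixes f :: "'u \<Rightarrow> 'y \<Rightarrow> 'a \<Rightarrow> 'c :: ordered_ab_group_add" and g :: "'u \<Rightarrow> 'y \<Rightarrow> 'b \<Rightarrow> 'c"
  assumes "\<And>u y a. F u y a \<Longrightarrow> \<exists>b. G u y b \<and> g u y b + c \<le> f u y a"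
    and "\<And>u y b. G u y b \<Longrightarrow> \<exists>a. F u y a \<and> f u y a \<le> g u y b + c"
  shows "optimal_outputs F f = optimal_outputs G g"
proof (rule antisym)
  show "optimal_outputs F f \<subseteq> optimal_outputs G g"
    using assms by (rule optimal_outputs_subset)
  show "optimal_outputs G g \<subseteq> optimal_outputs F f"
    using assms by (intro optimal_outputs_subset[where c = "- c"])
      (auto simp: diff_le_eq le_diff_eq simp flip: diff_conv_add_uminus)
qed

definition deepc_feasible ::
  "real mat \<Rightarrow> nat \<Rightarrow> nat \<Rightarrow> real vec set \<Rightarrow> real vec set \<Rightarrow> real vec \<Rightarrow>
   real vec \<Rightarrow> real vec \<Rightarrow> real vec \<Rightarrow> bool" where
  "deepc_feasible D nu ny U Y xi u y a \<longleftrightarrow>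
     u \<in> carrier_vec nu \<and> y \<in> carrier_vec ny \<and> a \<in> carrier_vec (dim_col D) \<and>
     xi @\<^sub>v u @\<^sub>v y = D *\<^sub>v a \<and> u \<in> U \<and> y \<in> Y"

definition gddpc_feasible ::
  "real mat \<Rightarrow> real mat \<Rightarrow> real mat \<Rightarrow> real mat \<Rightarrow> real mat \<Rightarrow> real mat \<Rightarrow>
   real vec set \<Rightarrow> real vec set \<Rightarrow> real vec \<Rightarrow> real vec \<Rightarrow> real vec \<Rightarrow> real vec \<Rightarrow> real vec \<Rightarrow> bool" where
  "gddpc_feasible L11 L21 L22 L31 L32 L33 U Y xi u y g2 g3 \<longleftrightarrow>
     g2 \<in> carrier_vec (dim_col L22) \<and> g3 \<in> carrier_vec (dim_col L33) \<and>
     u = L21 *\<^sub>v (mat_inv L11 *\<^sub>v xi) + L22 *\<^sub>v g2 \<and>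
     y = L31 *\<^sub>v (mat_inv L11 *\<^sub>v xi) + L32 *\<^sub>v g2 + L33 *\<^sub>v g3 \<and> u \<in> U \<and> y \<in> Y"

lemma deepc_opt_eq_optimal_outputs:
  "deepc_opt D nu ny J h U Y xi =
     optimal_outputs (deepc_feasible D nu ny U Y xi) (\<lambda>u y a. J xi u y + h a)"
  unfolding deepc_opt_def deepc_feasible_def optimal_outputs_def Let_def ..

lemma gddpc_opt_eq_optimal_outputs:
  "gddpc_opt L11 L21 L22 L31 L32 L33 J ht U Y xi =
     optimal_outputs (\<lambda>u y (g2, g3). gddpc_feasible L11 L21 L22 L31 L32 L33 U Y xi u y g2 g3)
       (\<lambda>u y (g2, g3). J xi u y + ht (mat_inv L11 *\<^sub>v xi) g2 g3)"
  unfolding gddpc_opt_def gddpc_feasible_def optimal_outputs_def Let_def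
  by (simp add: split_paired_Ex split_paired_All)

section \<open>DeePC and gamma-DDPC in the coordinates of the LQ decomposition\<close>

locale lq_decomposition =
  fixes n1 n2 n3 n4 l :: nat
    and Wp Uf Yf L11 L21 L22 L31 L32 L33 Q1 Q2 Q3 Q4 :: "real mat"
  assumes L11: "L11 \<in> carrier_mat n1 n1" "invertible_mat L11"
    and L22: "L22 \<in> carrier_mat n2 n2" "invertible_mat L22"
    and L33: "L33 \<in> carrier_mat n3 n3"
    and L21: "L21 \<in> carrier_mat n2 n1"
    and L31: "L31 \<in> carrier_mat n3 n1" and L32: "L32 \<in> carrier_mat n3 n2"
    and Q1: "Q1 \<in> carrier_mat n1 l" and Q2: "Q2 \<in> carrier_mat n2 l"
    and Q3: "Q3 \<in> carrier_mat n3 l" and Q4: "Q4 \<in> carrier_mat n4 l"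
    and Q_orth: "vstack Q1 (vstack Q2 (vstack Q3 Q4)) *
                   transpose_mat (vstack Q1 (vstack Q2 (vstack Q3 Q4))) = 1\<^sub>m l"
                "transpose_mat (vstack Q1 (vstack Q2 (vstack Q3 Q4))) *
                   vstack Q1 (vstack Q2 (vstack Q3 Q4)) = 1\<^sub>m l"
    and LQ: "Wp = L11 * Q1" "Uf = L21 * Q1 + L22 * Q2" "Yf = L31 * Q1 + L32 * Q2 + L33 * Q3"
begin

abbreviation Q :: "real mat" where "Q \<equiv> vstack Q1 (vstack Q2 (vstack Q3 Q4))"
abbreviation Q12 :: "real mat" where "Q12 \<equiv> vstack Q1 Q2"
abbreviation Q34 :: "real mat" where "Q34 \<equiv> vstack Q3 Q4"
abbreviation L :: "real mat" where "L \<equiv> four_block_mat L11 (0\<^sub>m n1 n2) L21 L22"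
abbreviation Z :: "real mat" where "Z \<equiv> vstack Wp Uf"
abbreviation D :: "real mat" where "D \<equiv> vstack Wp (vstack Uf Yf)"
abbreviation Pi_perp :: "real mat" where "Pi_perp \<equiv> 1\<^sub>m l - pinv Z * Z"

lemma block_dims [simp]:
  "dim_row Q1 = n1" "dim_row Q2 = n2" "dim_row Q3 = n3" "dim_row Q4 = n4"
  "dim_col Q1 = l" "dim_col Q2 = l" "dim_col Q3 = l" "dim_col Q4 = l"
  using Q1 Q2 Q3 Q4 by auto

lemma block_dims_sum: "n1 + n2 + (n3 + n4) = l"
  using arg_cong[OF Q_orth(1), of dim_row] by simp

lemma Q12_carrier: "Q12 \<in> carrier_mat (n1 + n2) l"
  using Q1 Q2 by (rule vstack_carrier_mat)

lemma Q34_carrier: "Q34 \<in> carrier_mat (n3 + n4) l"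
  using Q3 Q4 by (rule vstack_carrier_mat)

lemma Q_split: "Q = vstack Q12 Q34"
  by (simp add: vstack_assoc)

lemma Q_carrier: "Q \<in> carrier_mat l l"
  using vstack_carrier_mat[OF Q12_carrier Q34_carrier] unfolding Q_split block_dims_sum .

lemma Q_mult_vec: "Q *\<^sub>v a = (Q1 *\<^sub>v a) @\<^sub>v (Q2 *\<^sub>v a) @\<^sub>v (Q3 *\<^sub>v a) @\<^sub>v (Q4 *\<^sub>v a)"
  by (simp add: vstack_mult_mat_vec)

lemma Q_blocks_transpose_mult_vec:
  assumes "g1 \<in> carrier_vec n1" "g2 \<in> carrier_vec n2" "g3 \<in> carrier_vec n3" "g4 \<in> carrier_vec n4"
  defines "a \<equiv> transpose_mat Q *\<^sub>v (g1 @\<^sub>v g2 @\<^sub>v g3 @\<^sub>v g4)"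
  shows "a \<in> carrier_vec l" "Q1 *\<^sub>v a = g1" "Q2 *\<^sub>v a = g2" "Q3 *\<^sub>v a = g3" "Q4 *\<^sub>v a = g4"
proof -
  have g: "g1 @\<^sub>v g2 @\<^sub>v g3 @\<^sub>v g4 \<in> carrier_vec l"
    using assms block_dims_sum by (metis add.assoc append_carrier_vec)
  then show a: "a \<in> carrier_vec l"
    unfolding a_def using Q_carrier by simp
  have "Q *\<^sub>v a = g1 @\<^sub>v g2 @\<^sub>v g3 @\<^sub>v g4"
    unfolding a_def using Q_carrier g Q_orth(1) by (simp flip: assoc_mult_mat_vec)
  moreover have "Q1 *\<^sub>v a \<in> carrier_vec n1" "Q2 *\<^sub>v a \<in> carrier_vec n2"
    "Q3 *\<^sub>v a \<in> carrier_vec n3"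
    using Q1 Q2 Q3 a by auto
  ultimately show "Q1 *\<^sub>v a = g1" "Q2 *\<^sub>v a = g2" "Q3 *\<^sub>v a = g3" "Q4 *\<^sub>v a = g4"
    unfolding Q_mult_vec using assms(1-3) by (simp_all add: append_vec_eq)
qed

lemma sqnorm_Q_blocks:
  assumes "a \<in> carrier_vec l"
  shows "sqnorm a = sqnorm (Q1 *\<^sub>v a) + sqnorm (Q2 *\<^sub>v a) + sqnorm (Q3 *\<^sub>v a) + sqnorm (Q4 *\<^sub>v a)"
  using sqnorm_isometry[OF Q_carrier Q_orth(2) assms] by (simp add: Q_mult_vec sqnorm_append)

lemma Q12_Q34_orthonormal:
  "Q12 * transpose_mat Q12 = 1\<^sub>m (n1 + n2)" "Q34 * transpose_mat Q34 = 1\<^sub>m (n3 + n4)"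
  "transpose_mat Q12 * Q12 + transpose_mat Q34 * Q34 = 1\<^sub>m l"
proof -
  have "vstack Q12 Q34 * transpose_mat (vstack Q12 Q34) = 1\<^sub>m (n1 + n2 + (n3 + n4))"
    unfolding block_dims_sum Q_split[symmetric] by (rule Q_orth(1))
  then show "Q12 * transpose_mat Q12 = 1\<^sub>m (n1 + n2)" "Q34 * transpose_mat Q34 = 1\<^sub>m (n3 + n4)"
    by (rule vstack_orthonormal_rowsD[OF Q12_carrier Q34_carrier])+
  show "transpose_mat Q12 * Q12 + transpose_mat Q34 * Q34 = 1\<^sub>m l"
    using Q_orth(2)
    unfolding Q_split transpose_vstack_mult_vstack[OF Q12_carrier Q34_carrier Q12_carrier Q34_carrier] .
qed

lemma Z_factorization: "Z = L * Q12"
  using four_block_mat_mult_vstack[OF L11(1) zero_carrier_mat L21 L22(1) Q1 Q2] Q1 Q2 L11 L21 L22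
  by (simp add: LQ)

lemma L_carrier: "L \<in> carrier_mat (n1 + n2) (n1 + n2)"
  using L11(1) L22(1) by auto

lemma L_invertible: "invertible_mat L"
proof -
  have "det L = det L11 * det L22"
    using L11(1) L21 L22(1) by (rule det_four_block_mat_upper_right_zero[OF _ refl])
  then show ?thesis
    unfolding invertible_mat_iff_det_nonzero[OF L_carrier]
    using L11 L22 invertible_mat_iff_det_nonzero by auto
qed

lemma Pi_perp_eq: "Pi_perp = transpose_mat Q34 * Q34"
proof -
  have "pinv Z * Z = transpose_mat Q12 * Q12"
    unfolding Z_factorization
    by (rule pinv_mult_orthonormal_rows(2)[OF L_carrier L_invertible Q12_carrier
          Q12_Q34_orthonormal(1)])
  moreover have "transpose_mat Q12 * Q12 \<in> carrier_mat l l" "transpose_mat Q34 * Q34 \<in> carrier_mat l l"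
    using mult_carrier_mat[OF transpose_carrier_mat[THEN iffD2, OF Q12_carrier] Q12_carrier]
      mult_carrier_mat[OF transpose_carrier_mat[THEN iffD2, OF Q34_carrier] Q34_carrier] .
  ultimately show ?thesis
    by (intro eq_matI) (auto simp flip: Q12_Q34_orthonormal(3))
qed

lemma sqnorm_Pi_perp:
  assumes a: "a \<in> carrier_vec l"
  shows "sqnorm (Pi_perp *\<^sub>v a) = sqnorm (Q3 *\<^sub>v a) + sqnorm (Q4 *\<^sub>v a)"
proof -
  have Q34t: "transpose_mat Q34 \<in> carrier_mat l (n3 + n4)"
    using Q34_carrier by simp
  have "sqnorm (Pi_perp *\<^sub>v a) = sqnorm (transpose_mat Q34 *\<^sub>v (Q34 *\<^sub>v a))"
    unfolding Pi_perp_eq using assoc_mult_mat_vec[OF Q34t Q34_carrier a] by simp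
  also have "\<dots> = sqnorm (Q34 *\<^sub>v a)"
    using Q34_carrier a Q12_Q34_orthonormal(2) by (intro sqnorm_isometry[OF Q34t]) auto
  finally show ?thesis
    by (simp add: vstack_mult_mat_vec sqnorm_append)
qed

lemma regularizer_blocks:
  assumes a: "a \<in> carrier_vec l"
  shows "lambda2 * sqnorm a + (lambda3 - lambda2) * sqnorm (Pi_perp *\<^sub>v a) =
    lambda2 * sqnorm (Q1 *\<^sub>v a) + lambda2 * sqnorm (Q2 *\<^sub>v a) +
    lambda3 * sqnorm (Q3 *\<^sub>v a) + lambda3 * sqnorm (Q4 *\<^sub>v a)"
  unfolding sqnorm_Q_blocks[OF a] sqnorm_Pi_perp[OF a] by (simp add: algebra_simps)

lemma data_mult_vec:
  assumes a: "a \<in> carrier_vec l"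
  shows "D *\<^sub>v a = (L11 *\<^sub>v (Q1 *\<^sub>v a)) @\<^sub>v
    (L21 *\<^sub>v (Q1 *\<^sub>v a) + L22 *\<^sub>v (Q2 *\<^sub>v a)) @\<^sub>v
    (L31 *\<^sub>v (Q1 *\<^sub>v a) + L32 *\<^sub>v (Q2 *\<^sub>v a) + L33 *\<^sub>v (Q3 *\<^sub>v a))"
proof -
  have L21Q1: "L21 * Q1 \<in> carrier_mat n2 l" and L22Q2: "L22 * Q2 \<in> carrier_mat n2 l"
    and L31Q1: "L31 * Q1 \<in> carrier_mat n3 l" and L32Q2: "L32 * Q2 \<in> carrier_mat n3 l"
    and L33Q3: "L33 * Q3 \<in> carrier_mat n3 l"
    using L21 L22 L31 L32 L33 Q1 Q2 Q3 by auto
  show ?thesis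
    using add_mult_distrib_mat_vec[OF L21Q1 L22Q2 a]
      add_mult_distrib_mat_vec[OF add_carrier_mat[OF L32Q2, of "L31 * Q1"] L33Q3 a]
      add_mult_distrib_mat_vec[OF L31Q1 L32Q2 a] L11 L21 L22 L31 L32 L33 Q1 Q2 Q3 a
    by (simp add: LQ vstack_mult_mat_vec)
qed

lemma data_constraint_iff:
  assumes xi: "xi \<in> carrier_vec n1" and u: "u \<in> carrier_vec n2" and y: "y \<in> carrier_vec n3"
    and a: "a \<in> carrier_vec l"
  shows "xi @\<^sub>v u @\<^sub>v y = D *\<^sub>v a \<longleftrightarrow>
    Q1 *\<^sub>v a = mat_inv L11 *\<^sub>v xi \<and>
    u = L21 *\<^sub>v (Q1 *\<^sub>v a) + L22 *\<^sub>v (Q2 *\<^sub>v a) \<and>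
    y = L31 *\<^sub>v (Q1 *\<^sub>v a) + L32 *\<^sub>v (Q2 *\<^sub>v a) + L33 *\<^sub>v (Q3 *\<^sub>v a)"
proof -
  have "Q1 *\<^sub>v a \<in> carrier_vec n1" "L11 *\<^sub>v (Q1 *\<^sub>v a) \<in> carrier_vec n1"
    "L21 *\<^sub>v (Q1 *\<^sub>v a) + L22 *\<^sub>v (Q2 *\<^sub>v a) \<in> carrier_vec n2"
    using L11 L21 L22 Q1 Q2 a by auto
  then show ?thesis
    unfolding data_mult_vec[OF a] using xi u
    by (simp add: mat_inv_mult_vec_eq_iff[OF L11] eq_commute[of xi])
qed

lemma dim_col_D: "dim_col D = l"
  by (simp add: LQ)

lemma gamma_point_of_deepc_point:
  assumes xi: "xi \<in> carrier_vec n1" and lambda3: "0 \<le> lambda3"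
    and feasible: "deepc_feasible D n2 n3 U Y xi u y a"
  shows "gddpc_feasible L11 L21 L22 L31 L32 L33 U Y xi u y (Q2 *\<^sub>v a) (Q3 *\<^sub>v a)"
    and "lambda2 * sqnorm (Q2 *\<^sub>v a) + lambda3 * sqnorm (Q3 *\<^sub>v a) + lambda2 * sqnorm (mat_inv L11 *\<^sub>v xi)
         \<le> lambda2 * sqnorm a + (lambda3 - lambda2) * sqnorm (Pi_perp *\<^sub>v a)"
proof -
  have u: "u \<in> carrier_vec n2" and y: "y \<in> carrier_vec n3" and a: "a \<in> carrier_vec l"
    and constraint: "xi @\<^sub>v u @\<^sub>v y = D *\<^sub>v a" and "u \<in> U" "y \<in> Y"
    using feasible unfolding deepc_feasible_def dim_col_D by auto
  moreover note data = constraint[unfolded data_constraint_iff[OF xi u y a]]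
  ultimately show "gddpc_feasible L11 L21 L22 L31 L32 L33 U Y xi u y (Q2 *\<^sub>v a) (Q3 *\<^sub>v a)"
    unfolding gddpc_feasible_def using L22(1) L33 Q2 Q3 by auto
  have "0 \<le> lambda3 * sqnorm (Q4 *\<^sub>v a)"
    using lambda3 sqnorm_nonneg by simp
  then show "lambda2 * sqnorm (Q2 *\<^sub>v a) + lambda3 * sqnorm (Q3 *\<^sub>v a) + lambda2 * sqnorm (mat_inv L11 *\<^sub>v xi)
      \<le> lambda2 * sqnorm a + (lambda3 - lambda2) * sqnorm (Pi_perp *\<^sub>v a)"
    unfolding regularizer_blocks[OF a] data[THEN conjunct1, symmetric] by simp
qed

lemma deepc_point_of_gamma_point:
  assumes xi: "xi \<in> carrier_vec n1" and feasible: "gddpc_feasible L11 L21 L22 L31 L32 L33 U Y xi u y g2 g3"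
  defines "a \<equiv> transpose_mat Q *\<^sub>v ((mat_inv L11 *\<^sub>v xi) @\<^sub>v g2 @\<^sub>v g3 @\<^sub>v 0\<^sub>v n4)"
  shows "deepc_feasible D n2 n3 U Y xi u y a"
    and "lambda2 * sqnorm a + (lambda3 - lambda2) * sqnorm (Pi_perp *\<^sub>v a) =
         lambda2 * sqnorm g2 + lambda3 * sqnorm g3 + lambda2 * sqnorm (mat_inv L11 *\<^sub>v xi)"
proof -
  have g1: "mat_inv L11 *\<^sub>v xi \<in> carrier_vec n1"
    using mat_inv_inverse(1)[OF L11] xi by simp
  have g2: "g2 \<in> carrier_vec n2" and g3: "g3 \<in> carrier_vec n3"
    and u: "u = L21 *\<^sub>v (mat_inv L11 *\<^sub>v xi) + L22 *\<^sub>v g2"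
    and y: "y = L31 *\<^sub>v (mat_inv L11 *\<^sub>v xi) + L32 *\<^sub>v g2 + L33 *\<^sub>v g3" and "u \<in> U" "y \<in> Y"
    using feasible L22(1) L33 unfolding gddpc_feasible_def by auto
  moreover note blocks = Q_blocks_transpose_mult_vec[OF g1 g2 g3 zero_carrier_vec, folded a_def]
  moreover have "u \<in> carrier_vec n2" "y \<in> carrier_vec n3"
    unfolding u y using g1 g2 g3 L21 L22 L31 L32 L33 by auto
  ultimately show "deepc_feasible D n2 n3 U Y xi u y a"
    unfolding deepc_feasible_def dim_col_D using data_constraint_iff[OF xi _ _ blocks(1)] by auto
  show "lambda2 * sqnorm a + (lambda3 - lambda2) * sqnorm (Pi_perp *\<^sub>v a) =
      lambda2 * sqnorm g2 + lambda3 * sqnorm g3 + lambda2 * sqnorm (mat_inv L11 *\<^sub>v xi)"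
    unfolding regularizer_blocks[OF blocks(1)] blocks(2-5) by simp
qed

lemma gddpc_opt_eq_deepc_opt:
  assumes xi: "xi \<in> carrier_vec n1" and lambda3: "0 \<le> lambda3"
  shows "gddpc_opt L11 L21 L22 L31 L32 L33 J
           (\<lambda>g1 g2 g3. lambda2 * sqnorm g2 + lambda3 * sqnorm g3) U Y xi
       = deepc_opt D n2 n3 J
           (\<lambda>a. lambda2 * sqnorm a + (lambda3 - lambda2) * sqnorm (Pi_perp *\<^sub>v a)) U Y xi"
  unfolding gddpc_opt_eq_optimal_outputs deepc_opt_eq_optimal_outputs
proof (rule sym, rule optimal_outputs_eqI[where c = "lambda2 * sqnorm (mat_inv L11 *\<^sub>v xi)"],
    goal_cases)
  case (1 u y a)
  from gamma_point_of_deepc_point[OF xi lambda3 this] show ?case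
    by (intro exI[of _ "(Q2 *\<^sub>v a, Q3 *\<^sub>v a)"]) (simp add: add.assoc)
next
  case (2 u y b)
  then obtain g2 g3 where b: "b = (g2, g3)"
    and feasible: "gddpc_feasible L11 L21 L22 L31 L32 L33 U Y xi u y g2 g3"
    by (cases b) auto
  from deepc_point_of_gamma_point[OF xi feasible] show ?case
    unfolding b by (intro exI[of _ "transpose_mat Q *\<^sub>v ((mat_inv L11 *\<^sub>v xi) @\<^sub>v g2 @\<^sub>v g3 @\<^sub>v 0\<^sub>v n4)"])
      (simp add: add.assoc)
qed

end

theorem proposition5:
  fixes m p Np Nf l :: nat
    and Wp Uf Yf L11 L21 L22 L31 L32 L33 Q1 Q2 Q3 Q4 :: "real mat"
    and J :: "real vec \<Rightarrow> real vec \<Rightarrow> real vec \<Rightarrow> real"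
    and U Y :: "real vec set"
    and lambda2 lambda3 :: real
  defines "n1 \<equiv> Np * (m + p)" and "n2 \<equiv> m * Nf" and "n3 \<equiv> p * Nf"
  defines "D \<equiv> vstack Wp (vstack Uf Yf)"
    and "Q \<equiv> vstack Q1 (vstack Q2 (vstack Q3 Q4))"
    and "Z \<equiv> vstack Wp Uf"
  defines "Pi_perp \<equiv> 1\<^sub>m l - pinv Z * Z"
  assumes Wp: "Wp \<in> carrier_mat n1 l" and Uf: "Uf \<in> carrier_mat n2 l"
    and Yf: "Yf \<in> carrier_mat n3 l"
    and rank: "full_row_rank D"
    and L11: "L11 \<in> carrier_mat n1 n1" "invertible_mat L11"
    and L22: "L22 \<in> carrier_mat n2 n2" "invertible_mat L22"
    and L33: "L33 \<in> carrier_mat n3 n3" "invertible_mat L33"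
    and L21: "L21 \<in> carrier_mat n2 n1"
    and L31: "L31 \<in> carrier_mat n3 n1" and L32: "L32 \<in> carrier_mat n3 n2"
    and Q1: "Q1 \<in> carrier_mat n1 l" and Q2: "Q2 \<in> carrier_mat n2 l"
    and Q3: "Q3 \<in> carrier_mat n3 l" and Q4: "Q4 \<in> carrier_mat (l - (n1 + n2 + n3)) l"
    and Q_orth: "Q * transpose_mat Q = 1\<^sub>m l" "transpose_mat Q * Q = 1\<^sub>m l"
    and LQ: "Wp = L11 * Q1" "Uf = L21 * Q1 + L22 * Q2" "Yf = L31 * Q1 + L32 * Q2 + L33 * Q3"
    and lambda3: "0 \<le> lambda3"
  shows "\<forall>xi \<in> carrier_vec n1.
           gddpc_opt L11 L21 L22 L31 L32 L33 J
             (\<lambda>g1 g2 g3. lambda2 * sqnorm g2 + lambda3 * sqnorm g3) U Y xi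
         = deepc_opt D n2 n3 J
             (\<lambda>a. lambda2 * sqnorm a + (lambda3 - lambda2) * sqnorm (Pi_perp *\<^sub>v a)) U Y xi"
proof -
  define n4 where "n4 = l - (n1 + n2 + n3)"
  have lq: "lq_decomposition n1 n2 n3 n4 l Wp Uf Yf L11 L21 L22 L31 L32 L33 Q1 Q2 Q3 Q4"
    using L11 L22 L33(1) L21 L31 L32 Q1 Q2 Q3 Q4 Q_orth LQ
    unfolding lq_decomposition_def n4_def Q_def by blast
  show ?thesis
    unfolding D_def Z_def Pi_perp_def
    by (intro ballI lq_decomposition.gddpc_opt_eq_deepc_opt[OF lq _ lambda3])
qed

end
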